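(* Let $A>0$, $B\in\mathbb{R}$, $R>0$ with $0<4|B|R<\pi$, and $a_1(k)=1+\frac{A^2e^{4\mathrm{i} kR}}{4(k^2-B^2)}$. Let $\varphi$ denote the argument of $a_1$ defined as below. Then: 1) If $0<R<\frac{\pi}{2(4B^2+A^2)^{1/2}}$: $\varphi(k)\in(-\pi,\pi)$ for $k\in(-\infty,-|B|)$; $\lim_{k\uparrow-|B|}\varphi(k)=-\theta_{-|B|}$ with $\theta_{-|B|}\in(0,\pi)$; $\lim_{k\downarrow-|B|}\varphi(k)=\pi-\theta_{-|B|}$; and $\varphi(k)\in(0,\pi)$ for $k\in(-|B|,0)$. 2) If $\frac{(2n-1)\pi}{2(4B^2+A^2)^{1/2}}<R<\frac{(2n+1)\pi}{2(4B^2+A^2)^{1/2}}$ for some $n\in\mathbb{N}$, then with $\omega_{n+1}=-\infty$, $\omega_j=-\frac{(2j-1)\pi}{4R}$ ($j=1,\dots,n$), $\omega_0=-|B|$: $\varphi(\omega_{n-j+1})=(2j-1)\pi$ for $j=1,\dots,n$; $\varphi(k)\in(2\pi j-\pi,2\pi j+\pi)$ for $k\in(\omega_{n-j+1},\omega_{n-j})$, $j=0,\dots,n$; $\lim_{k\uparrow-|B|}\varphi(k)=2\pi n-\theta_{-|B|}$ with $\theta_{-|B|}\in(0,\pi)$; $\lim_{k\downarrow-|B|}\varphi(k)=2\pi n+\pi-\theta_{-|B|}$; and $\varphi(k)\in(2\pi n,2\pi n+\pi)$ for $k\in(-|B|,0)$. 3) $\lim_{k\uparrow0}\varphi(k)$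 equals: if $4B^2-A^2>0$, $0$ when $0<R<\frac{\pi}{2(4B^2+A^2)^{1/2}}$ and $2\pi n$ when $\frac{(2n-1)\pi}{2(4B^2+A^2)^{1/2}}<R<\frac{(2n+1)\pi}{2(4B^2+A^2)^{1/2}}$; if $4B^2-A^2<0$, $\pi$ when $0<R<\frac{\pi}{2(4B^2+A^2)^{1/2}}$ and $2\pi n+\pi$ when $\frac{(2n-1)\pi}{2(4B^2+A^2)^{1/2}}<R<\frac{(2n+1)\pi}{2(4B^2+A^2)^{1/2}}$.
   Context: $\varphi$ is the continuous branch of $\arg a_1(k)$ along the path that runs over the real axis from $-\infty$ to $0$, except that it bypasses the pole $k=-|B|$ along a small semicircle in the upper half-plane, normalized by $\varphi(k)\to0$ as $k\to-\infty$ (under the hypotheses $a_1$ does not vanish on this path). For $k\in(-\infty,0)\setminus\{-|B|\}$, $\varphi(k)$ is its value at the real point $k$. (In the paper this quantity is written as $\int_{-\infty}^kd\arg a_1$, and for $k>-|B|$ as $\int_{-|B|}^k d\arg a_1$.) *)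

theory Defs
  imports "HOL-Analysis.Analysis"
begin

definition a1 :: "real \<Rightarrow> real \<Rightarrow> real \<Rightarrow> complex \<Rightarrow> complex" where
  "a1 A B R k = 1 + (complex_of_real (A^2)) * exp (4 * \<i> * k * complex_of_real R)
                     / (4 * (k^2 - complex_of_real (B^2)))"

text \<open>The integration path, parametrised by t in (-infinity, 0): the real axis, except that
  for t in [-|B|-e, -|B|+e] it runs along the upper semicircle of radius e centred at -|B|
  (from -|B|-e over -|B|+i e to -|B|+e).\<close>
definition bypass_path :: "real \<Rightarrow> real \<Rightarrow> real \<Rightarrow> complex" where
  "bypass_path B e t =
     (if t \<le> -\<bar>B\<bar> - e \<or> t \<ge> -\<bar>B\<bar> + e then complex_of_real t
      else complex_of_real (-\<bar>B\<bar>) + complex_of_real e *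
             exp (\<i> * complex_of_real (pi * (1 - (t + \<bar>B\<bar>) / e) / 2)))"

definition is_arg_lift :: "real \<Rightarrow> real \<Rightarrow> real \<Rightarrow> real \<Rightarrow> (real \<Rightarrow> real) \<Rightarrow> bool" where
  "is_arg_lift A B R e Phi \<longleftrightarrow>
     continuous_on {..<0} Phi \<and>
     (\<forall>t<0. cis (Phi t) = sgn (a1 A B R (bypass_path B e t))) \<and>
     (Phi \<longlongrightarrow> 0) at_bot"

text \<open>varphi(k) for real k < 0, k /= -|B|: the value at k of the branch along the path with a
  sufficiently small semicircle.\<close>
definition arg_a1 :: "real \<Rightarrow> real \<Rightarrow> real \<Rightarrow> real \<Rightarrow> real" where
  "arg_a1 A B R k = (THE v. \<forall>\<^sub>F e in at_right 0. \<exists>Phi. is_arg_lift A B R e Phi \<and> Phi k = v)"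

definition omega :: "real \<Rightarrow> real \<Rightarrow> nat \<Rightarrow> real" where
  "omega B R j = (if j = 0 then -\<bar>B\<bar> else - (2 * real j - 1) * pi / (4 * R))"

end

(*
  The argument of a1 is followed by comparing a continuous lift Phi with the principal value
  Arg a1.  On any interval where a1 stays off the closed negative real axis, Phi - Arg a1 is
  constant; it vanishes near -infinity, and it grows by 2 pi whenever a1 crosses the negative
  real axis from the upper into the lower half plane.

  Left of the pole, a1 k = 1 + c k * cis (4 k R) with c k = A^2 / (4 (k^2 - B^2)) > 0, so a1 k
  is real and non-positive only at the points omega j = -(2 j - 1) pi / (4 R) with c >= 1.
  The band condition on R says c (omega j) > 1 exactly for j <= n, so there are n downward
  crossings and Phi = 2 pi (n - j) + Arg a1 between omega (j + 1) and omega j.  Near the pole,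
  (z + |B|) a1 z tends to A^2 / (8 |B|) cis (pi - 4 |B| R), which lies in the upper half plane;
  hence a small upper semicircle around -|B| avoids the negative axis, the offset 2 pi n
  persists up to 0, and the one-sided limits at -|B| and the limit at 0 are read off from Arg.
*)

theory Submission
  imports Defs "HOL-Real_Asymp.Real_Asymp"
begin

lemma Arg_sgn: "Arg (sgn z) = Arg z" for z :: complex
proof (cases "z = 0")
  case False
  then have "sgn z = z / complex_of_real (cmod z)"
    by (simp add: sgn_div_norm scaleR_conv_of_real divide_inverse mult.commute)
  then show ?thesis using False by simp
qed simp

lemma sgn_in_nonpos_Reals_iff: "sgn z \<in> \<real>\<^sub>\<le>\<^sub>0 \<longleftrightarrow> z \<in> \<real>\<^sub>\<le>\<^sub>0" for z :: complex
proof (cases "z = 0")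
  case False
  then have "cmod z > 0" by simp
  then show ?thesis by (auto simp: complex_nonpos_Reals_iff divide_nonpos_pos divide_le_0_iff)
qed simp

lemma Arg_bounds_not_nonpos_Reals: "z \<notin> \<real>\<^sub>\<le>\<^sub>0 \<Longrightarrow> Arg z \<in> {-pi<..<pi}"
  using mpi_less_Arg[of z] Arg_le_pi[of z] Arg_eq_pi[of z] by (auto simp: complex_nonpos_Reals_iff)

lemma cis_eq_1_iff: "cis x = 1 \<longleftrightarrow> (\<exists>m::int. x = 2 * pi * m)"
  by (auto simp: cis_conv_exp exp_eq_1 mult.commute)

lemma sin_neg_interval: "-pi < x \<Longrightarrow> x < 0 \<Longrightarrow> sin x < 0"
  using sin_gt_zero[of "- x"] by simp

lemma sin_minus_odd_multiple_pi: "sin (x - (2 * real j - 1) * pi) = - sin x"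
proof -
  have "(2 * real j - 1) * pi = pi * of_int (2 * int j - 1)" by simp
  then show ?thesis by (simp only: sin_diff cos_npi_int sin_npi_int) simp
qed

lemma arg_lift_minus_Arg_constant:
  fixes Phi :: "'a::topological_space \<Rightarrow> real" and f :: "'a \<Rightarrow> complex"
  assumes S: "connected S" and cont: "continuous_on S Phi"
    and lift: "\<And>t. t \<in> S \<Longrightarrow> cis (Phi t) = sgn (f t)"
    and off_axis: "\<And>t. t \<in> S \<Longrightarrow> f t \<notin> \<real>\<^sub>\<le>\<^sub>0"
    and "s \<in> S" "t \<in> S"
  shows "Phi s - Arg (f s) = Phi t - Arg (f t)"
proof -
  have Arg_f: "Arg (f t) = Arg (cis (Phi t))" if "t \<in> S" for t
    using lift[OF that] by (simp add: Arg_sgn)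
  define h where "h t = (Phi t - Arg (cis (Phi t))) / (2 * pi)" for t
  have h_int: "h t \<in> \<int>" for t
  proof -
    have "cis (Phi t - Arg (cis (Phi t))) = 1"
      by (simp add: cis_divide[symmetric] cis_Arg)
    then obtain m :: int where "Phi t - Arg (cis (Phi t)) = 2 * pi * m"
      using cis_eq_1_iff by blast
    then show ?thesis by (simp add: h_def)
  qed
  have "continuous_on S h"
    unfolding h_def using off_axis lift
    by (intro continuous_intros cont) (auto simp: sgn_in_nonpos_Reals_iff)
  then have "h constant_on S"
  proof (rule continuous_discrete_range_constant[OF S])
    fix x assume "x \<in> S"
    show "\<exists>e>0. \<forall>y. y \<in> S \<and> h y \<noteq> h x \<longrightarrow> e \<le> norm (h y - h x)"
    proof (intro exI[of _ 1] conjI allI impI)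
      fix y assume "y \<in> S \<and> h y \<noteq> h x"
      with h_int[of x] h_int[of y] show "1 \<le> norm (h y - h x)"
        by (auto elim!: Ints_cases)
    qed simp
  qed
  then have "h s = h t" using assms(5,6) by (auto simp: constant_on_def)
  then show ?thesis using assms(5,6) by (simp add: h_def Arg_f)
qed

lemma arg_lift_crossing_negative_axis:
  fixes Phi :: "real \<Rightarrow> real" and f :: "real \<Rightarrow> complex"
  assumes cont: "continuous_on {a<..<b} Phi"
    and lift: "\<And>t. t \<in> {a<..<b} \<Longrightarrow> cis (Phi t) = sgn (f t)"
    and c: "a < c" "c < b" and f_c: "Im (f c) = 0" "Re (f c) < 0"
    and above: "\<And>t. t \<in> {a<..<c} \<Longrightarrow> 0 < Im (f t)"
    and below: "\<And>t. t \<in> {c<..<b} \<Longrightarrow> Im (f t) < 0"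
    and s: "s \<in> {a<..<c}" and u: "u \<in> {c<..<b}"
  shows "Phi u - Arg (f u) = Phi s - Arg (f s) + 2 * pi"
    and "Phi c = Phi s - Arg (f s) + pi"
proof -
  have off_axis: "- f t \<notin> \<real>\<^sub>\<le>\<^sub>0" if "t \<in> {a<..<b}" for t
  proof (cases t c rule: linorder_cases)
    case less with that above[of t] show ?thesis by (auto simp: complex_nonpos_Reals_iff)
  next
    case equal with f_c show ?thesis by (auto simp: complex_nonpos_Reals_iff)
  next
    case greater with that below[of t] show ?thesis by (auto simp: complex_nonpos_Reals_iff)
  qed
  have const: "Phi x - pi - Arg (- f x) = Phi y - pi - Arg (- f y)"
    if "x \<in> {a<..<b}" "y \<in> {a<..<b}" for x y
  proof (rule arg_lift_minus_Arg_constant[where f = "\<lambda>t. - f t"])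
    show "continuous_on {a<..<b} (\<lambda>t. Phi t - pi)" by (intro continuous_intros cont)
    show "cis (Phi t - pi) = sgn (- f t)" if "t \<in> {a<..<b}" for t
      using lift[OF that] by (simp flip: minus_cis')
  qed (use off_axis that in auto)
  have "f s \<noteq> 0" "0 < Arg (f s)" using above[OF s] Arg_lt_pi by auto
  then have Arg_s: "Arg (- f s) = Arg (f s) - pi" by (simp add: Arg_minus)
  have "f u \<noteq> 0" "Arg (f u) < 0" using below[OF u] Arg_neg_iff by auto
  then have Arg_u: "Arg (- f u) = Arg (f u) + pi" by (simp add: Arg_minus)
  have Arg_c: "Arg (- f c) = 0" using f_c by (simp add: Arg_eq_0 complex_is_Real_iff)
  have "s \<in> {a<..<b}" "u \<in> {a<..<b}" "c \<in> {a<..<b}" using s u c by auto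
  then show "Phi u - Arg (f u) = Phi s - Arg (f s) + 2 * pi"
    and "Phi c = Phi s - Arg (f s) + pi"
    using const Arg_s Arg_u Arg_c by (smt (verit))+
qed

lemma continuous_arg_exists:
  fixes f :: "'a::real_normed_vector \<Rightarrow> complex"
  assumes "continuous_on S f" "contractible S" "\<And>t. t \<in> S \<Longrightarrow> f t \<noteq> 0"
  obtains Phi where "continuous_on S Phi" "\<And>t. t \<in> S \<Longrightarrow> cis (Phi t) = sgn (f t)"
proof -
  obtain G where G: "continuous_on S G" "\<And>t. t \<in> S \<Longrightarrow> f t = exp (G t)"
    using continuous_logarithm_on_contractible[OF assms] by blast
  show ?thesis
  proof
    show "continuous_on S (\<lambda>t. Im (G t))" by (intro continuous_intros G(1))
    show "cis (Im (G t)) = sgn (f t)" if "t \<in> S" for t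
      unfolding G(2)[OF that] exp_eq_polar[of "G t"]
      by (simp add: sgn_mult sgn_of_real)
  qed
qed

lemma a1_of_real:
  "a1 A B R (of_real t) = 1 + of_real (A^2 / (4 * (t^2 - B^2))) * cis (4 * t * R)"
proof -
  have "exp (4 * \<i> * of_real t * of_real R) = cis (4 * t * R)"
    by (simp add: cis_conv_exp mult_ac)
  moreover have "4 * ((of_real t)^2 - of_real (B^2)) = (of_real (4 * (t^2 - B^2)) :: complex)"
    by simp
  ultimately show ?thesis
    unfolding a1_def by (simp add: field_simps del: of_real_mult of_real_diff)
qed

text \<open>This is \<open>(z + \<bar>B\<bar>) * a1 z\<close>, which is regular at the pole \<open>z = -\<bar>B\<bar>\<close>.\<close>

definition a1_pole_cleared :: "real \<Rightarrow> real \<Rightarrow> real \<Rightarrow> complex \<Rightarrow> complex" where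
  "a1_pole_cleared A B R z =
     (z + of_real \<bar>B\<bar>) + of_real (A^2) * exp (4 * \<i> * z * of_real R) / (4 * (z - of_real \<bar>B\<bar>))"

lemma a1_eq_pole_cleared:
  assumes "z \<noteq> of_real \<bar>B\<bar>" "z \<noteq> - of_real \<bar>B\<bar>"
  shows "a1 A B R z = a1_pole_cleared A B R z / (z + of_real \<bar>B\<bar>)"
proof -
  have nz: "z - of_real \<bar>B\<bar> \<noteq> 0" "z + of_real \<bar>B\<bar> \<noteq> 0"
    using assms by (auto simp: add_eq_0_iff2)
  have "of_real (B^2) = (of_real \<bar>B\<bar> :: complex)^2"
    by (simp flip: of_real_power)
  then have factor: "4 * (z^2 - of_real (B^2)) = 4 * (z - of_real \<bar>B\<bar>) * (z + of_real \<bar>B\<bar>)"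
    by (simp add: power2_eq_square algebra_simps)
  define X where "X = of_real (A^2) * exp (4 * \<i> * z * of_real R)"
  have "a1_pole_cleared A B R z / (z + of_real \<bar>B\<bar>)
      = (z + of_real \<bar>B\<bar>) / (z + of_real \<bar>B\<bar>) + X / (4 * (z - of_real \<bar>B\<bar>)) / (z + of_real \<bar>B\<bar>)"
    unfolding a1_pole_cleared_def X_def by (simp add: add_divide_distrib)
  also have "\<dots> = 1 + X / (4 * (z - of_real \<bar>B\<bar>) * (z + of_real \<bar>B\<bar>))"
    using nz by simp
  finally show ?thesis
    unfolding a1_def factor X_def by simp
qed

locale a1_setting =
  fixes A B R :: real
  assumes A_pos: "0 < A" and R_pos: "0 < R"
    and B_R_pos: "0 < 4 * \<bar>B\<bar> * R" and B_R_less_pi: "4 * \<bar>B\<bar> * R < pi"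
begin

lemma abs_B_pos: "0 < \<bar>B\<bar>"
  using B_R_pos R_pos by (simp add: zero_less_mult_iff)

lemma abs_B_less: "\<bar>B\<bar> < pi / (4 * R)"
  using B_R_less_pi R_pos by (simp add: field_simps)

lemma B_square_less: "t < -\<bar>B\<bar> \<Longrightarrow> B^2 < t^2"
  using power_strict_mono[of "\<bar>B\<bar>" "-t" 2] by simp

lemma square_less_B_square: "-\<bar>B\<bar> < t \<Longrightarrow> t < 0 \<Longrightarrow> t^2 < B^2"
  using power_strict_mono[of "-t" "\<bar>B\<bar>" 2] by simp

lemma coeff_pos: "t < -\<bar>B\<bar> \<Longrightarrow> 0 < A^2 / (4 * (t^2 - B^2))"
  using A_pos B_square_less by simp

lemma coeff_neg: "-\<bar>B\<bar> < t \<Longrightarrow> t < 0 \<Longrightarrow> A^2 / (4 * (t^2 - B^2)) < 0"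
  using A_pos square_less_B_square by (simp add: divide_pos_neg)

lemma Im_a1_of_real: "Im (a1 A B R (of_real t)) = A^2 / (4 * (t^2 - B^2)) * sin (4 * t * R)"
  and Re_a1_of_real: "Re (a1 A B R (of_real t)) = 1 + A^2 / (4 * (t^2 - B^2)) * cos (4 * t * R)"
  by (simp_all add: a1_of_real)

lemma Im_a1_pos_right: "-\<bar>B\<bar> < t \<Longrightarrow> t < 0 \<Longrightarrow> 0 < Im (a1 A B R (of_real t))"
proof -
  assume t: "-\<bar>B\<bar> < t" "t < 0"
  have "-pi < 4 * t * R" "4 * t * R < 0"
    using t R_pos B_R_less_pi mult_strict_right_mono[OF t(1) R_pos] by (auto simp: mult_neg_pos)
  then have "sin (4 * t * R) < 0" by (rule sin_neg_interval)
  then show ?thesis unfolding Im_a1_of_real using coeff_neg[OF t] by (rule mult_neg_neg[rotated])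
qed

lemma Im_a1_pos_left:
  assumes "t < -\<bar>B\<bar>" "0 < sin (4 * t * R)" shows "0 < Im (a1 A B R (of_real t))"
  unfolding Im_a1_of_real using coeff_pos[OF assms(1)] assms(2) by (rule mult_pos_pos)

lemma Im_a1_neg_left:
  assumes "t < -\<bar>B\<bar>" "sin (4 * t * R) < 0" shows "Im (a1 A B R (of_real t)) < 0"
  unfolding Im_a1_of_real using coeff_pos[OF assms(1)] assms(2) by (rule mult_pos_neg)

lemma a1_tendsto_at_bot: "((\<lambda>t. a1 A B R (of_real t)) \<longlongrightarrow> 1) at_bot"
proof -
  have "((\<lambda>t. A^2 / (4 * (t^2 - B^2))) \<longlongrightarrow> 0) at_bot"
    by real_asymp
  then have "((\<lambda>t. norm (of_real (A^2 / (4 * (t^2 - B^2))) * cis (4 * t * R))) \<longlongrightarrow> 0) at_bot"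
    unfolding norm_mult norm_cis norm_of_real mult_1_right by (rule tendsto_rabs_zero)
  then have "((\<lambda>t. of_real (A^2 / (4 * (t^2 - B^2))) * cis (4 * t * R)) \<longlongrightarrow> 0) at_bot"
    by (rule tendsto_norm_zero_cancel)
  then have "((\<lambda>t. 1 + of_real (A^2 / (4 * (t^2 - B^2))) * cis (4 * t * R)) \<longlongrightarrow> 1 + 0) at_bot"
    by (intro tendsto_add tendsto_const)
  then show ?thesis by (simp add: a1_of_real)
qed

lemma far_left_off_axis: "\<forall>\<^sub>F t in at_bot. a1 A B R (of_real t) \<notin> \<real>\<^sub>\<le>\<^sub>0"
proof -
  have "\<forall>\<^sub>F t in at_bot. 0 < Re (a1 A B R (of_real t))"
    using tendsto_Re[OF a1_tendsto_at_bot] by (auto elim: order_tendstoD)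
  then show ?thesis by eventually_elim (auto simp: complex_nonpos_Reals_iff)
qed

lemma omega_pos_index: "1 \<le> i \<Longrightarrow> omega B R i = - ((2 * real i - 1) * pi / (4 * R))"
  using R_pos by (simp add: omega_def field_simps)

lemma omega_less_abs_B: "1 \<le> i \<Longrightarrow> omega B R i < -\<bar>B\<bar>"
proof -
  assume i: "1 \<le> i"
  have "pi / (4 * R) \<le> (2 * real i - 1) * pi / (4 * R)"
    using i R_pos by (intro divide_right_mono) auto
  then show ?thesis using abs_B_less omega_pos_index[OF i] by linarith
qed

lemma omega_less_iff: "omega B R i < omega B R i' \<longleftrightarrow> i' < i"
proof -
  have less: "omega B R i < omega B R i'" if "i' < i" for i i'
  proof (cases "i' = 0")
    case True
    then show ?thesis using omega_less_abs_B[of i] that by (simp add: omega_def)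
  next
    case False
    have "(2 * real i' - 1) * pi / (4 * R) < (2 * real i - 1) * pi / (4 * R)"
      using that R_pos by (intro divide_strict_right_mono mult_strict_right_mono) auto
    then show ?thesis using False that omega_pos_index[of i] omega_pos_index[of i'] by simp
  qed
  show ?thesis using less[of i' i] less[of i i'] by (cases i i' rule: linorder_cases) auto
qed

lemma omega_times_4R: "1 \<le> i \<Longrightarrow> 4 * omega B R i * R = - (2 * real i - 1) * pi"
  using R_pos by (simp add: omega_pos_index field_simps)

lemma omega_Suc: "1 \<le> i \<Longrightarrow> omega B R (Suc i) = omega B R i - pi / (2 * R)"
  using R_pos by (simp add: omega_pos_index field_simps)

lemma Im_a1_around_omega:
  assumes i: "1 \<le> i" and t: "t < -\<bar>B\<bar>" "\<bar>t - omega B R i\<bar> < pi / (4 * R)"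
  shows "t < omega B R i \<Longrightarrow> 0 < Im (a1 A B R (of_real t))"
    and "omega B R i < t \<Longrightarrow> Im (a1 A B R (of_real t)) < 0"
proof -
  define d where "d = 4 * R * (t - omega B R i)"
  have "4 * t * R = d - (2 * real i - 1) * pi"
    using omega_times_4R[OF i] by (simp add: d_def algebra_simps)
  then have sin_d: "sin (4 * t * R) = - sin d" by (simp add: sin_minus_odd_multiple_pi)
  have "4 * R * \<bar>t - omega B R i\<bar> < pi"
    using t(2) R_pos by (simp add: field_simps)
  then have "\<bar>d\<bar> < pi" using R_pos by (simp add: d_def abs_mult)
  then have d: "-pi < d" "d < pi" by auto
  show "0 < Im (a1 A B R (of_real t))" if "t < omega B R i"
  proof -
    have "d < 0" using that R_pos by (simp add: d_def mult_pos_neg)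
    then show ?thesis using Im_a1_pos_left[OF t(1)] sin_neg_interval[of d] d sin_d by simp
  qed
  show "Im (a1 A B R (of_real t)) < 0" if "omega B R i < t"
  proof -
    have "0 < d" using that R_pos by (simp add: d_def)
    then show ?thesis using Im_a1_neg_left[OF t(1)] sin_gt_zero[of d] d sin_d by simp
  qed
qed

lemma a1_in_nonpos_Reals_left:
  assumes t: "t < -\<bar>B\<bar>" and nonpos: "a1 A B R (of_real t) \<in> \<real>\<^sub>\<le>\<^sub>0"
  obtains i where "1 \<le> i" "t = omega B R i" "1 \<le> A^2 / (4 * (t^2 - B^2))"
proof -
  define c where "c = A^2 / (4 * (t^2 - B^2))"
  have c: "0 < c" using coeff_pos[OF t] by (simp add: c_def)
  have "c * sin (4 * t * R) = 0" "1 + c * cos (4 * t * R) \<le> 0"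
    using nonpos by (auto simp: complex_nonpos_Reals_iff Im_a1_of_real Re_a1_of_real c_def)
  then obtain m :: int where m: "4 * t * R = m * pi" and cos_le: "1 + c * cos (m * pi) \<le> 0"
    using c by (auto simp: sin_zero_iff_int2)
  have "odd m" using cos_le c by (auto simp: mult.commute[of _ pi])
  then obtain k where k: "m = 2 * k + 1" by (rule oddE)
  have "m * pi < 0" using m t R_pos abs_B_pos by (simp add: mult_neg_pos flip: m)
  then have "k < 0" using k by (simp add: mult_less_0_iff)
  show ?thesis
  proof
    show "1 \<le> nat (- k)" using \<open>k < 0\<close> by simp
    show "t = omega B R (nat (- k))"
      using m k \<open>k < 0\<close> R_pos by (simp add: omega_def field_simps)
    show "1 \<le> A^2 / (4 * (t^2 - B^2))"
      using cos_le c \<open>odd m\<close> by (simp add: c_def mult.commute[of _ pi])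
  qed
qed

lemma coeff_gt_1_iff: "t < -\<bar>B\<bar> \<Longrightarrow> 1 < A^2 / (4 * (t^2 - B^2)) \<longleftrightarrow> 4 * t^2 < 4 * B^2 + A^2"
  using B_square_less[of t] by (simp add: field_simps)

lemma coeff_less_1_iff: "t < -\<bar>B\<bar> \<Longrightarrow> A^2 / (4 * (t^2 - B^2)) < 1 \<longleftrightarrow> 4 * B^2 + A^2 < 4 * t^2"
  using B_square_less[of t] by (simp add: field_simps)

lemma pole_cleared_continuous: "isCont (a1_pole_cleared A B R) (- of_real \<bar>B\<bar>)"
proof -
  have "- of_real \<bar>B\<bar> - of_real \<bar>B\<bar> \<noteq> (0 :: complex)"
    using abs_B_pos by (simp flip: of_real_diff of_real_minus)
  then show ?thesis unfolding a1_pole_cleared_def by (intro continuous_intros) auto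
qed

lemma pole_cleared_at_pole:
  "a1_pole_cleared A B R (- of_real \<bar>B\<bar>) = of_real (A^2 / (8 * \<bar>B\<bar>)) * cis (pi - 4 * \<bar>B\<bar> * R)"
proof -
  have "exp (4 * \<i> * (- of_real \<bar>B\<bar>) * of_real R) = cis (- (4 * \<bar>B\<bar> * R))"
    by (simp add: cis_conv_exp mult_ac)
  also have "\<dots> = - cis (pi - 4 * \<bar>B\<bar> * R)"
    using minus_cis'[of "pi - 4 * \<bar>B\<bar> * R"] by simp
  finally have "exp (4 * \<i> * (- of_real \<bar>B\<bar>) * of_real R) = - cis (pi - 4 * \<bar>B\<bar> * R)" .
  then show ?thesis
    unfolding a1_pole_cleared_def using abs_B_pos by (simp add: field_simps)
qed

lemma a1_not_nonpos_near_pole: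
  obtains \<delta> where "0 < \<delta>"
    "\<And>z. cmod (z + of_real \<bar>B\<bar>) < \<delta> \<Longrightarrow> 0 < Im z \<Longrightarrow> a1 A B R z \<notin> \<real>\<^sub>\<le>\<^sub>0"
proof -
  let ?g = "a1_pole_cleared A B R"
  have "0 < Im (?g (- of_real \<bar>B\<bar>))"
    using A_pos abs_B_pos B_R_pos B_R_less_pi
    by (simp add: pole_cleared_at_pole sin_gt_zero)
  moreover have "isCont (\<lambda>z. Im (?g z)) (- of_real \<bar>B\<bar>)"
    using isCont_Im[OF pole_cleared_continuous] .
  ultimately obtain \<delta> where \<delta>: "0 < \<delta>"
      "\<And>z. dist z (- of_real \<bar>B\<bar>) < \<delta> \<Longrightarrow> dist (Im (?g z)) (Im (?g (- of_real \<bar>B\<bar>))) < Im (?g (- of_real \<bar>B\<bar>))"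
    unfolding continuous_at_eps_delta by blast
  show ?thesis
  proof (rule that[OF \<delta>(1)])
    fix z assume near: "cmod (z + of_real \<bar>B\<bar>) < \<delta>" and upper: "0 < Im z"
    have "z \<noteq> of_real \<bar>B\<bar>" "z \<noteq> - of_real \<bar>B\<bar>" using upper by auto
    then have g_eq: "?g z = a1 A B R z * (z + of_real \<bar>B\<bar>)"
      using a1_eq_pole_cleared by (simp add: add_eq_0_iff2)
    have g_pos: "0 < Im (?g z)"
      using \<delta>(2)[of z] near by (simp add: dist_norm dist_real_def)
    show "a1 A B R z \<notin> \<real>\<^sub>\<le>\<^sub>0"
    proof
      assume "a1 A B R z \<in> \<real>\<^sub>\<le>\<^sub>0"
      then have "Re (a1 A B R z) \<le> 0" "Im (a1 A B R z) = 0"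
        by (auto simp: complex_nonpos_Reals_iff)
      then have "Im (?g z) \<le> 0"
        using upper by (simp add: g_eq mult_nonpos_nonneg)
      with g_pos show False by simp
    qed
  qed
qed

lemma pole_cleared_at_pole_Arg:
  shows "Arg (a1_pole_cleared A B R (- of_real \<bar>B\<bar>)) = pi - 4 * \<bar>B\<bar> * R"
    and "a1_pole_cleared A B R (- of_real \<bar>B\<bar>) \<notin> \<real>\<^sub>\<le>\<^sub>0"
    and "Arg (- a1_pole_cleared A B R (- of_real \<bar>B\<bar>)) = - (4 * \<bar>B\<bar> * R)"
    and "- a1_pole_cleared A B R (- of_real \<bar>B\<bar>) \<notin> \<real>\<^sub>\<le>\<^sub>0"
proof -
  define r where "r = A^2 / (8 * \<bar>B\<bar>)"
  have r: "0 < r" using A_pos abs_B_pos by (simp add: r_def)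
  have sin_pos: "0 < sin (4 * \<bar>B\<bar> * R)" using B_R_pos B_R_less_pi by (rule sin_gt_zero)
  have g0: "a1_pole_cleared A B R (- of_real \<bar>B\<bar>) = of_real r * cis (pi - 4 * \<bar>B\<bar> * R)"
    by (simp add: r_def pole_cleared_at_pole)
  have "cis (- (4 * \<bar>B\<bar> * R)) = - cis (pi - 4 * \<bar>B\<bar> * R)"
    using minus_cis'[of "pi - 4 * \<bar>B\<bar> * R"] by simp
  then have minus_g0: "- a1_pole_cleared A B R (- of_real \<bar>B\<bar>) = of_real r * cis (- (4 * \<bar>B\<bar> * R))"
    by (simp only: g0 mult_minus_right)
  have "pi - 4 * \<bar>B\<bar> * R \<in> {-pi<..pi}" "- (4 * \<bar>B\<bar> * R) \<in> {-pi<..pi}"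
    unfolding greaterThanAtMost_iff using B_R_pos B_R_less_pi by (intro conjI; linarith)+
  then show "Arg (a1_pole_cleared A B R (- of_real \<bar>B\<bar>)) = pi - 4 * \<bar>B\<bar> * R"
    and "Arg (- a1_pole_cleared A B R (- of_real \<bar>B\<bar>)) = - (4 * \<bar>B\<bar> * R)"
    using r by (simp only: g0 Arg_times_of_real Arg_cis, simp only: minus_g0 Arg_times_of_real Arg_cis)
  show "a1_pole_cleared A B R (- of_real \<bar>B\<bar>) \<notin> \<real>\<^sub>\<le>\<^sub>0"
    using r sin_pos by (simp add: g0 complex_nonpos_Reals_iff)
  show "- a1_pole_cleared A B R (- of_real \<bar>B\<bar>) \<notin> \<real>\<^sub>\<le>\<^sub>0"
    using r sin_pos by (simp add: minus_g0 complex_nonpos_Reals_iff)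
qed

lemma eventually_right_of_pole: "\<forall>\<^sub>F k in at_right (-\<bar>B\<bar>). k \<in> {-\<bar>B\<bar><..<0}"
  using abs_B_pos by (intro eventually_at_right_real) simp

lemma eventually_left_of_0: "\<forall>\<^sub>F k in at_left 0. k \<in> {-\<bar>B\<bar><..<0}"
  using abs_B_pos by (intro eventually_at_left_real) simp

lemma Arg_a1_tendsto_at_pole:
  shows "((\<lambda>k. Arg (a1 A B R (of_real k))) \<longlongrightarrow> - (4 * \<bar>B\<bar> * R)) (at_left (-\<bar>B\<bar>))"
    and "((\<lambda>k. Arg (a1 A B R (of_real k))) \<longlongrightarrow> pi - 4 * \<bar>B\<bar> * R) (at_right (-\<bar>B\<bar>))"
proof -
  let ?g = "a1_pole_cleared A B R"
  have g_lim: "((\<lambda>k. ?g (of_real k)) \<longlongrightarrow> ?g (- of_real \<bar>B\<bar>)) (at (-\<bar>B\<bar>) within S)" for S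
    by (rule isCont_tendsto_compose[OF pole_cleared_continuous]) (auto intro!: tendsto_eq_intros)
  have a1_eq: "a1 A B R (of_real k) = ?g (of_real k) / of_real (k + \<bar>B\<bar>)"
    if "k \<noteq> -\<bar>B\<bar>" "k < 0" for k
    using that abs_B_pos a1_eq_pole_cleared[of "of_real k"] by (simp flip: of_real_minus)
  have "\<forall>\<^sub>F k in at_left (-\<bar>B\<bar>). k \<in> {-\<bar>B\<bar> - 1<..<-\<bar>B\<bar>}"
    by (rule eventually_at_left_real) simp
  then have "\<forall>\<^sub>F k in at_left (-\<bar>B\<bar>). Arg (- ?g (of_real k)) = Arg (a1 A B R (of_real k))"
  proof eventually_elim
    case (elim k)
    then have "a1 A B R (of_real k) = - ?g (of_real k) / of_real (- (k + \<bar>B\<bar>))"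
      using a1_eq[of k] abs_B_pos by (simp only: of_real_minus minus_divide_divide) simp
    moreover have "0 < - (k + \<bar>B\<bar>)" using elim by simp
    ultimately show ?case by (simp only: Arg_divide_of_real)
  qed
  then show "((\<lambda>k. Arg (a1 A B R (of_real k))) \<longlongrightarrow> - (4 * \<bar>B\<bar> * R)) (at_left (-\<bar>B\<bar>))"
    using tendsto_Arg[OF tendsto_minus[OF g_lim] pole_cleared_at_pole_Arg(4)]
    unfolding pole_cleared_at_pole_Arg(3) by (rule Lim_transform_eventually[rotated])
  have "\<forall>\<^sub>F k in at_right (-\<bar>B\<bar>). Arg (?g (of_real k)) = Arg (a1 A B R (of_real k))"
    using eventually_right_of_pole
  proof eventually_elim
    case (elim k)
    then have "0 < k + \<bar>B\<bar>" by simp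
    from Arg_divide_of_real[OF this, of "?g (of_real k)"] show ?case
      using a1_eq[of k] elim by simp
  qed
  then show "((\<lambda>k. Arg (a1 A B R (of_real k))) \<longlongrightarrow> pi - 4 * \<bar>B\<bar> * R) (at_right (-\<bar>B\<bar>))"
    using tendsto_Arg[OF g_lim pole_cleared_at_pole_Arg(2)]
    unfolding pole_cleared_at_pole_Arg(1) by (rule Lim_transform_eventually[rotated])
qed

lemma Arg_a1_tendsto_at_0:
  shows "0 < 4 * B^2 - A^2 \<Longrightarrow> ((\<lambda>k. Arg (a1 A B R (of_real k))) \<longlongrightarrow> 0) (at_left 0)"
    and "4 * B^2 - A^2 < 0 \<Longrightarrow> ((\<lambda>k. Arg (a1 A B R (of_real k))) \<longlongrightarrow> pi) (at_left 0)"
proof -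
  define c where "c = 1 - A^2 / (4 * B^2)"
  have "isCont (a1 A B R) 0"
    unfolding a1_def using abs_B_pos by (intro continuous_intros) (simp flip: of_real_power)
  then have lim: "((\<lambda>k. a1 A B R (of_real k)) \<longlongrightarrow> of_real c) (at_left 0)"
    by (rule isCont_tendsto_compose[where g = "a1 A B R", THEN tendsto_eq_rhs])
       (auto simp: c_def a1_def intro!: tendsto_eq_intros)
  show "((\<lambda>k. Arg (a1 A B R (of_real k))) \<longlongrightarrow> 0) (at_left 0)" if "0 < 4 * B^2 - A^2"
  proof -
    have "0 < c" using that abs_B_pos by (simp add: c_def field_simps)
    then have "((\<lambda>k. Arg (a1 A B R (of_real k))) \<longlongrightarrow> Arg (of_real c)) (at_left 0)"
      by (intro tendsto_Arg[OF lim]) (simp add: complex_nonpos_Reals_iff)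
    then show ?thesis using \<open>0 < c\<close> by simp
  qed
  show "((\<lambda>k. Arg (a1 A B R (of_real k))) \<longlongrightarrow> pi) (at_left 0)" if "4 * B^2 - A^2 < 0"
  proof -
    have "c < 0" using that abs_B_pos by (simp add: c_def field_simps)
    have "((\<lambda>k. - a1 A B R (of_real k)) \<longlongrightarrow> of_real (- c)) (at_left 0)"
      using tendsto_minus[OF lim] by simp
    then have lim_Arg: "((\<lambda>k. Arg (- a1 A B R (of_real k))) \<longlongrightarrow> Arg (of_real (- c))) (at_left 0)"
      using \<open>c < 0\<close> by (intro tendsto_Arg) (simp_all add: complex_nonpos_Reals_iff)
    have "Arg (of_real (- c)) = 0" using \<open>c < 0\<close> by (subst Arg_of_real) simp
    with tendsto_add[OF lim_Arg tendsto_const[of pi]]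
    have "((\<lambda>k. Arg (- a1 A B R (of_real k)) + pi) \<longlongrightarrow> pi) (at_left 0)" by simp
    moreover have "\<forall>\<^sub>F k in at_left 0. Arg (- a1 A B R (of_real k)) + pi = Arg (a1 A B R (of_real k))"
      using eventually_left_of_0
    proof eventually_elim
      case (elim k)
      then have "0 < Im (a1 A B R (of_real k))" using Im_a1_pos_right by simp
      then have "0 < Arg (a1 A B R (of_real k))" "a1 A B R (of_real k) \<noteq> 0"
        using Arg_lt_pi by auto
      then show ?case by (simp add: Arg_minus)
    qed
    ultimately show ?thesis by (rule Lim_transform_eventually)
  qed
qed

lemma omega_square_less_iff:
  assumes "1 \<le> i"
  shows "4 * (omega B R i)^2 < 4 * B^2 + A^2 \<longleftrightarrow>
           (2 * real i - 1) * pi / (2 * sqrt (4 * B^2 + A^2)) < R"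
    and "4 * B^2 + A^2 < 4 * (omega B R i)^2 \<longleftrightarrow>
           R < (2 * real i - 1) * pi / (2 * sqrt (4 * B^2 + A^2))"
proof -
  define x where "x = (2 * real i - 1) * pi / (4 * R)"
  have x: "0 < x" using assms R_pos by (simp add: x_def)
  have s: "0 < sqrt (4 * B^2 + A^2)" using A_pos by (simp add: add_nonneg_pos)
  have "4 * (omega B R i)^2 = (2 * x)^2"
    by (simp add: omega_pos_index[OF assms] x_def power2_eq_square)
  then have sqrt_om: "sqrt (4 * (omega B R i)^2) = 2 * x"
    using x by (simp only: real_sqrt_abs)
  have "4 * (omega B R i)^2 < 4 * B^2 + A^2 \<longleftrightarrow> 2 * x < sqrt (4 * B^2 + A^2)"
    by (simp flip: sqrt_om)
  also have "\<dots> \<longleftrightarrow> (2 * real i - 1) * pi / (2 * sqrt (4 * B^2 + A^2)) < R"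
    using R_pos s by (auto simp: x_def field_simps)
  finally show "4 * (omega B R i)^2 < 4 * B^2 + A^2 \<longleftrightarrow>
      (2 * real i - 1) * pi / (2 * sqrt (4 * B^2 + A^2)) < R" .
  have "4 * B^2 + A^2 < 4 * (omega B R i)^2 \<longleftrightarrow> sqrt (4 * B^2 + A^2) < 2 * x"
    by (simp flip: sqrt_om)
  also have "\<dots> \<longleftrightarrow> R < (2 * real i - 1) * pi / (2 * sqrt (4 * B^2 + A^2))"
    using R_pos s by (auto simp: x_def field_simps)
  finally show "4 * B^2 + A^2 < 4 * (omega B R i)^2 \<longleftrightarrow>
      R < (2 * real i - 1) * pi / (2 * sqrt (4 * B^2 + A^2))" .
qed

lemma a1_omega: "1 \<le> i \<Longrightarrow>
    a1 A B R (of_real (omega B R i)) = of_real (1 - A^2 / (4 * ((omega B R i)^2 - B^2)))"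
proof -
  assume i: "1 \<le> i"
  define m :: int where "m = 1 - 2 * int i"
  have "odd m" by (simp add: m_def)
  have "4 * omega B R i * R = pi * of_int m"
    using omega_times_4R[OF i] by (simp add: m_def algebra_simps)
  then have "cis (4 * omega B R i * R) = -1"
    using \<open>odd m\<close> by (simp add: complex_eq_iff)
  then show ?thesis by (simp add: a1_of_real)
qed

end

text \<open>\<open>n\<close> counts the zeros \<open>omega i\<close> of \<open>Im a1\<close> left of the pole at which \<open>a1\<close> is negative;
  the band excludes the boundary values of \<open>R\<close>, at which \<open>a1\<close> vanishes at some \<open>omega i\<close>.\<close>

locale a1_band = a1_setting +
  fixes n :: nat
  assumes below_band: "R < (2 * real n + 1) * pi / (2 * sqrt (4 * B^2 + A^2))"
    and above_band: "1 \<le> n \<Longrightarrow> (2 * real n - 1) * pi / (2 * sqrt (4 * B^2 + A^2)) < R"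
begin

lemma coeff_omega_gt_1:
  assumes "1 \<le> i" "i \<le> n" shows "1 < A^2 / (4 * ((omega B R i)^2 - B^2))"
proof -
  have "(2 * real i - 1) * pi / (2 * sqrt (4 * B^2 + A^2))
      \<le> (2 * real n - 1) * pi / (2 * sqrt (4 * B^2 + A^2))"
    using assms(2) by (intro divide_right_mono mult_right_mono) auto
  then have "4 * (omega B R i)^2 < 4 * B^2 + A^2"
    using above_band assms by (simp add: omega_square_less_iff)
  then show ?thesis using coeff_gt_1_iff[OF omega_less_abs_B[OF assms(1)]] by simp
qed

lemma coeff_omega_less_1:
  assumes "n < i" shows "A^2 / (4 * ((omega B R i)^2 - B^2)) < 1"
proof -
  have "(2 * real n + 1) * pi / (2 * sqrt (4 * B^2 + A^2))
      \<le> (2 * real i - 1) * pi / (2 * sqrt (4 * B^2 + A^2))"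
    using assms by (intro divide_right_mono mult_right_mono) auto
  then have "4 * B^2 + A^2 < 4 * (omega B R i)^2"
    using below_band assms by (simp add: omega_square_less_iff)
  moreover have "1 \<le> i" using assms by simp
  ultimately show ?thesis using coeff_less_1_iff[OF omega_less_abs_B] by simp
qed

lemma a1_omega_negative:
  assumes "1 \<le> i" "i \<le> n"
  shows "Im (a1 A B R (of_real (omega B R i))) = 0" "Re (a1 A B R (of_real (omega B R i))) < 0"
  using coeff_omega_gt_1[OF assms] by (simp_all add: a1_omega[OF assms(1)])

lemma a1_in_nonpos_Reals_iff:
  assumes "t < -\<bar>B\<bar>"
  shows "a1 A B R (of_real t) \<in> \<real>\<^sub>\<le>\<^sub>0 \<longleftrightarrow> (\<exists>i\<in>{1..n}. t = omega B R i)"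
proof
  assume "a1 A B R (of_real t) \<in> \<real>\<^sub>\<le>\<^sub>0"
  then obtain i where i: "1 \<le> i" "t = omega B R i" "1 \<le> A^2 / (4 * (t^2 - B^2))"
    using a1_in_nonpos_Reals_left[OF assms] by blast
  then have "i \<le> n" using coeff_omega_less_1[of i] by (cases "i \<le> n") auto
  then show "\<exists>i\<in>{1..n}. t = omega B R i" using i by auto
next
  assume "\<exists>i\<in>{1..n}. t = omega B R i"
  then obtain i where "1 \<le> i" "i \<le> n" "t = omega B R i" by auto
  with a1_omega_negative[of i] show "a1 A B R (of_real t) \<in> \<real>\<^sub>\<le>\<^sub>0"
    by (simp add: complex_nonpos_Reals_iff)
qed

lemma a1_nonzero_left: "t < -\<bar>B\<bar> \<Longrightarrow> a1 A B R (of_real t) \<noteq> 0"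
  using a1_in_nonpos_Reals_iff a1_omega_negative by fastforce

text \<open>The paper's interval \<open>(omega (j + 1), omega j)\<close> with \<open>omega (n + 1) = -\<infinity>\<close>; the interval
  for \<open>j = 0\<close> is continued across the pole up to \<open>0\<close>.\<close>

definition region :: "nat \<Rightarrow> real set" where
  "region j = {t. (j = n \<or> omega B R (Suc j) < t) \<and> t < (if j = 0 then 0 else omega B R j)}"

lemma connected_region: "connected (region j)"
proof (cases "j = n")
  case True
  then have "region j = {..<(if j = 0 then 0 else omega B R j)}" by (auto simp: region_def)
  then show ?thesis by simp
next
  case False
  then have "region j = {omega B R (Suc j)<..<(if j = 0 then 0 else omega B R j)}"
    by (auto simp: region_def)
  then show ?thesis by simp
qed

lemma region_negative: "t \<in> region j \<Longrightarrow> t < 0"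
  using omega_less_abs_B[of j] abs_B_pos by (auto simp: region_def split: if_splits)

lemma a1_not_nonpos_region:
  assumes t: "t \<in> region j" "t < -\<bar>B\<bar>"
  shows "a1 A B R (of_real t) \<notin> \<real>\<^sub>\<le>\<^sub>0"
proof
  assume "a1 A B R (of_real t) \<in> \<real>\<^sub>\<le>\<^sub>0"
  then obtain i where i: "1 \<le> i" "i \<le> n" "t = omega B R i"
    using a1_in_nonpos_Reals_iff[OF t(2)] by auto
  have "j < i"
    using t(1) i omega_less_iff[of i j] omega_less_abs_B[of i] abs_B_pos
    by (auto simp: region_def split: if_splits)
  moreover have "i < Suc j"
    using t(1) i omega_less_iff[of "Suc j" i] \<open>j < i\<close> by (auto simp: region_def)
  ultimately show False by simp
qed

end

lemma bypass_path_real: "t \<le> -\<bar>B\<bar> - e \<or> -\<bar>B\<bar> + e \<le> t \<Longrightarrow> bypass_path B e t = of_real t"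
  by (auto simp: bypass_path_def)

lemma bypass_path_semicircle:
  assumes e: "0 < e" and t: "-\<bar>B\<bar> - e < t" "t < -\<bar>B\<bar> + e"
  shows "cmod (bypass_path B e t + of_real \<bar>B\<bar>) = e" "0 < Im (bypass_path B e t)"
proof -
  define \<alpha> where "\<alpha> = pi * (1 - (t + \<bar>B\<bar>) / e) / 2"
  have "0 < 1 - (t + \<bar>B\<bar>) / e" "1 - (t + \<bar>B\<bar>) / e < 2"
    using e t by (auto simp: field_simps)
  then have \<alpha>: "0 < \<alpha>" "\<alpha> < pi"
    unfolding \<alpha>_def using mult_strict_left_mono[of _ 2 pi] by auto
  have path: "bypass_path B e t = of_real (-\<bar>B\<bar>) + of_real e * cis \<alpha>"
    using t by (simp add: bypass_path_def cis_conv_exp \<alpha>_def)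
  show "cmod (bypass_path B e t + of_real \<bar>B\<bar>) = e" using e by (simp add: path norm_mult)
  show "0 < Im (bypass_path B e t)" using e \<alpha> by (simp add: path sin_gt_zero)
qed

lemma continuous_bypass_path: "0 < e \<Longrightarrow> continuous_on UNIV (bypass_path B e)"
proof -
  assume e: "0 < e"
  define arc where "arc t = complex_of_real (-\<bar>B\<bar>) + complex_of_real e *
             exp (\<i> * complex_of_real (pi * (1 - (t + \<bar>B\<bar>) / e) / 2))" for t
  have arc_start: "arc (-\<bar>B\<bar> - e) = of_real (-\<bar>B\<bar> - e)"
    unfolding arc_def using e by (simp add: cis_conv_exp[symmetric])
  have arc_end: "arc (-\<bar>B\<bar> + e) = of_real (-\<bar>B\<bar> + e)"
    unfolding arc_def using e by simp
  have path: "bypass_path B e = (\<lambda>t. if t \<le> -\<bar>B\<bar> - e then of_real t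
      else if t \<le> -\<bar>B\<bar> + e then arc t else of_real t)"
  proof
    fix t show "bypass_path B e t = (if t \<le> -\<bar>B\<bar> - e then of_real t
        else if t \<le> -\<bar>B\<bar> + e then arc t else of_real t)"
      using arc_end by (cases "t = -\<bar>B\<bar> + e") (auto simp: bypass_path_def arc_def)
  qed
  have arc_cont: "continuous_on S arc" for S
    unfolding arc_def using e by (intro continuous_intros) auto
  then have "continuous_on {-\<bar>B\<bar> - e..} (\<lambda>t. if t \<le> -\<bar>B\<bar> + e then arc t else of_real t)"
    using arc_end by (intro continuous_on_cases_le[where h = "\<lambda>x. x"]) (auto intro!: continuous_intros)
  then show ?thesis
    unfolding path using arc_start arc_end arc_cont
    by (intro continuous_on_cases_le[where h = "\<lambda>x. x"]) (auto intro!: continuous_intros)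
qed

locale small_bypass = a1_band +
  fixes e :: real
  assumes e_pos: "0 < e" and e_less: "e < pi / (4 * R) - \<bar>B\<bar>"
    and semicircle_off_axis:
      "\<And>z. cmod (z + of_real \<bar>B\<bar>) = e \<Longrightarrow> 0 < Im z \<Longrightarrow> a1 A B R z \<notin> \<real>\<^sub>\<le>\<^sub>0"
begin

abbreviation a1_path :: "real \<Rightarrow> complex" where
  "a1_path t \<equiv> a1 A B R (bypass_path B e t)"

lemma omega_1_left_of_semicircle: "omega B R 1 < -\<bar>B\<bar> - e"
  using e_less by (simp add: omega_def)

lemma a1_path_cases:
  assumes "t < 0"
  obtains "t \<le> -\<bar>B\<bar> - e" "a1_path t = a1 A B R (of_real t)"
    | "-\<bar>B\<bar> - e < t" "t < -\<bar>B\<bar> + e" "a1_path t \<notin> \<real>\<^sub>\<le>\<^sub>0"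
    | "-\<bar>B\<bar> + e \<le> t" "a1_path t = a1 A B R (of_real t)" "0 < Im (a1_path t)"
proof -
  consider "t \<le> -\<bar>B\<bar> - e" | "-\<bar>B\<bar> - e < t \<and> t < -\<bar>B\<bar> + e" | "-\<bar>B\<bar> + e \<le> t"
    by linarith
  then show ?thesis
  proof cases
    case 3
    then show ?thesis using that(3) assms Im_a1_pos_right[of t] e_pos by (simp add: bypass_path_real)
  qed (use that bypass_path_real bypass_path_semicircle[OF e_pos] semicircle_off_axis in auto)
qed

lemma a1_path_nonzero:
  assumes "t < 0" shows "a1_path t \<noteq> 0"
  using assms
proof (cases rule: a1_path_cases)
  case 1
  then show ?thesis using a1_nonzero_left[of t] e_pos by simp
qed auto

lemma a1_path_not_nonpos_region:
  assumes t: "t \<in> region j" shows "a1_path t \<notin> \<real>\<^sub>\<le>\<^sub>0"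
  using region_negative[OF t]
proof (cases rule: a1_path_cases)
  case 1
  then show ?thesis using a1_not_nonpos_region[OF t] e_pos by simp
qed (auto simp: complex_nonpos_Reals_iff)

lemma continuous_a1_path: "continuous_on {..<0} a1_path"
proof -
  have "bypass_path B e t \<noteq> of_real \<bar>B\<bar> \<and> bypass_path B e t \<noteq> - of_real \<bar>B\<bar>" if "t < 0" for t
  proof (cases "-\<bar>B\<bar> - e < t \<and> t < -\<bar>B\<bar> + e")
    case True
    then show ?thesis using bypass_path_semicircle(2)[OF e_pos] by force
  next
    case False
    then show ?thesis using that abs_B_pos e_pos
      by (auto simp: bypass_path_real simp flip: of_real_minus)
  qed
  moreover have "of_real (B^2) = (of_real \<bar>B\<bar> :: complex)^2"
    by (simp only: of_real_power[symmetric] power2_abs)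
  ultimately have "4 * ((bypass_path B e t)^2 - of_real (B^2)) \<noteq> 0" if "t < 0" for t
    using that by (auto simp: power2_eq_iff)
  then show ?thesis
    unfolding a1_def using continuous_bypass_path[OF e_pos]
    by (intro continuous_intros) (auto intro: continuous_on_subset)
qed

lemma far_left_real_off_axis:
  obtains N where "N < 0" "\<And>t. t < N \<Longrightarrow> a1_path t = a1 A B R (of_real t)"
    "\<And>t. t < N \<Longrightarrow> a1 A B R (of_real t) \<notin> \<real>\<^sub>\<le>\<^sub>0"
proof -
  obtain N where N: "\<And>t. t \<le> N \<Longrightarrow> a1 A B R (of_real t) \<notin> \<real>\<^sub>\<le>\<^sub>0"
    using far_left_off_axis unfolding eventually_at_bot_linorder by blast
  show ?thesis
  proof (rule that[of "min N (-\<bar>B\<bar> - e)"])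
    show "min N (-\<bar>B\<bar> - e) < 0" using abs_B_pos e_pos by simp
  qed (simp_all add: bypass_path_real N)
qed

lemma arg_lift_exists: "\<exists>Phi. is_arg_lift A B R e Phi"
proof -
  have "convex {..<0::real}" by simp
  then obtain Phi0 where Phi0: "continuous_on {..<0} Phi0"
      "\<And>t. t < 0 \<Longrightarrow> cis (Phi0 t) = sgn (a1_path t)"
    using continuous_arg_exists[OF continuous_a1_path convex_imp_contractible] a1_path_nonzero
    by (metis lessThan_iff)
  obtain N where N: "N < 0" and path_far: "\<And>t. t < N \<Longrightarrow> a1_path t = a1 A B R (of_real t)"
    and off_axis: "\<And>t. t < N \<Longrightarrow> a1 A B R (of_real t) \<notin> \<real>\<^sub>\<le>\<^sub>0"
    using far_left_real_off_axis by blast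
  define c where "c = Phi0 (N - 1) - Arg (a1_path (N - 1))"
  have c: "Phi0 t - Arg (a1_path t) = c" if "t < N" for t
    unfolding c_def
  proof (rule arg_lift_minus_Arg_constant[where S = "{..<N}"])
    show "continuous_on {..<N} Phi0" using N by (intro continuous_on_subset[OF Phi0(1)]) auto
  qed (use that Phi0(2) N off_axis path_far in auto)
  have "cis c = 1"
    using Phi0(2)[of "N - 1"] a1_path_nonzero[of "N - 1"] N
    by (simp add: c_def cis_divide[symmetric] cis_Arg sgn_eq_0_iff)
  define Phi where "Phi t = Phi0 t - c" for t
  have "continuous_on {..<0} Phi" unfolding Phi_def by (intro continuous_intros Phi0(1))
  moreover have "\<forall>t<0. cis (Phi t) = sgn (a1_path t)"
    using Phi0(2) \<open>cis c = 1\<close> by (simp add: Phi_def cis_divide[symmetric])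
  moreover have "(Phi \<longlongrightarrow> 0) at_bot"
  proof -
    have "Arg (a1 A B R (of_real t)) = Phi t" if "t < N" for t
      using c[OF that] unfolding path_far[OF that] Phi_def by linarith
    then have "\<forall>\<^sub>F t in at_bot. Arg (a1 A B R (of_real t)) = Phi t"
      unfolding eventually_at_bot_dense by blast
    moreover have "((\<lambda>t. Arg (a1 A B R (of_real t))) \<longlongrightarrow> Arg 1) at_bot"
      by (rule tendsto_Arg[OF a1_tendsto_at_bot]) simp
    ultimately show ?thesis by (simp add: tendsto_cong)
  qed
  ultimately show ?thesis unfolding is_arg_lift_def by blast
qed

end

locale arg_lift = small_bypass +
  fixes Phi :: "real \<Rightarrow> real"
  assumes lift: "is_arg_lift A B R e Phi"
begin

lemma lift_continuous: "continuous_on {..<0} Phi"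
  and lift_cis: "t < 0 \<Longrightarrow> cis (Phi t) = sgn (a1_path t)"
  and lift_at_bot: "(Phi \<longlongrightarrow> 0) at_bot"
  using lift unfolding is_arg_lift_def by auto

lemma lift_minus_Arg_region_constant:
  assumes "s \<in> region j" "t \<in> region j"
  shows "Phi s - Arg (a1_path s) = Phi t - Arg (a1_path t)"
proof (rule arg_lift_minus_Arg_constant[OF connected_region])
  show "continuous_on (region j) Phi"
    using region_negative by (intro continuous_on_subset[OF lift_continuous]) auto
qed (use assms region_negative lift_cis a1_path_not_nonpos_region in auto)

lemma lift_minus_Arg_region_n:
  assumes t: "t \<in> region n" shows "Phi t - Arg (a1_path t) = 0"
proof -
  define x where "x = min (-\<bar>B\<bar> - e) (if n = 0 then 0 else omega B R n)"
  have "Phi s - Arg (a1 A B R (of_real s)) = Phi t - Arg (a1_path t)" if "s < x" for s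
    using lift_minus_Arg_region_constant[OF _ t, of s] that
    by (simp add: region_def x_def bypass_path_real)
  then have ev: "\<forall>\<^sub>F s in at_bot. Phi s - Arg (a1 A B R (of_real s)) = Phi t - Arg (a1_path t)"
    unfolding eventually_at_bot_dense by blast
  have lim: "((\<lambda>s. Phi s - Arg (a1 A B R (of_real s))) \<longlongrightarrow> 0 - Arg 1) at_bot"
    by (intro tendsto_intros lift_at_bot a1_tendsto_at_bot) simp
  have "((\<lambda>s::real. Phi t - Arg (a1_path t)) \<longlongrightarrow> 0 - Arg 1) at_bot"
    using Lim_transform_eventually[OF lim ev] .
  then show ?thesis by (simp add: tendsto_const_iff)
qed

lemma lift_crossing_omega:
  assumes j: "1 \<le> j" "j \<le> n"
  obtains s u where "s \<in> region j" "u \<in> region (j - 1)"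
    "Phi u - Arg (a1_path u) = Phi s - Arg (a1_path s) + 2 * pi"
    "Phi (omega B R j) = Phi s - Arg (a1_path s) + pi"
proof -
  define q where "q = pi / (4 * R)"
  define \<omega> where "\<omega> = omega B R j"
  define b where "b = min (\<omega> + q) (-\<bar>B\<bar> - e)"
  have q: "0 < q" using R_pos by (simp add: q_def)
  have "\<omega> \<le> omega B R 1" using j(1) omega_less_iff[of 1 j] by (cases "j = 1") (auto simp: \<omega>_def)
  then have \<omega>_b: "\<omega> < b" using omega_1_left_of_semicircle q by (simp add: b_def)
  have b_le: "b \<le> \<omega> + q" "b \<le> -\<bar>B\<bar> - e" by (simp_all add: b_def)
  have left_of_pole: "t < -\<bar>B\<bar>" if "t < b" for t using that b_le e_pos by linarith
  have real_path: "a1_path t = a1 A B R (of_real t)" if "t < b" for t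
    using that by (simp add: b_def bypass_path_real)
  have above: "0 < Im (a1_path t)" if "t \<in> {\<omega> - q<..<\<omega>}" for t
    using that \<omega>_b real_path[of t] left_of_pole[of t] Im_a1_around_omega(1)[OF j(1), of t]
    by (simp add: \<omega>_def q_def abs_less_iff)
  have below: "Im (a1_path t) < 0" if "t \<in> {\<omega><..<b}" for t
    using that b_le real_path[of t] left_of_pole[of t] Im_a1_around_omega(2)[OF j(1), of t]
    by (simp add: \<omega>_def q_def abs_less_iff)
  have at_omega: "Im (a1_path \<omega>) = 0" "Re (a1_path \<omega>) < 0"
    using a1_omega_negative[OF j] real_path[OF \<omega>_b] by (simp_all add: \<omega>_def)
  have interval_negative: "{\<omega> - q<..<b} \<subseteq> {..<0}"
    using left_of_pole abs_B_pos by fastforce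
  define s where "s = \<omega> - q / 2"
  define u where "u = (\<omega> + b) / 2"
  have s: "s \<in> {\<omega> - q<..<\<omega>}" and u: "u \<in> {\<omega><..<b}"
    using q \<omega>_b by (auto simp: s_def u_def)
  have "continuous_on {\<omega> - q<..<b} Phi"
    by (rule continuous_on_subset[OF lift_continuous interval_negative])
  then have "Phi u - Arg (a1_path u) = Phi s - Arg (a1_path s) + 2 * pi"
    and "Phi \<omega> = Phi s - Arg (a1_path s) + pi"
    by (rule arg_lift_crossing_negative_axis[where c = \<omega>];
        use q \<omega>_b interval_negative lift_cis at_omega above below s u in auto)+
  moreover have "s \<in> region j"
    using q j(1) omega_Suc[OF j(1)] by (auto simp: region_def \<omega>_def s_def q_def)
  moreover have "\<omega> + q \<le> (if j - 1 = 0 then 0 else omega B R (j - 1))"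
    using j(1) R_pos by (auto simp: \<omega>_def q_def omega_pos_index field_simps)
  then have "u \<in> region (j - 1)"
    using u b_le j(1) by (auto simp: region_def \<omega>_def)
  ultimately show ?thesis using that by (simp add: \<omega>_def)
qed

lemma lift_minus_Arg_region:
  assumes "j \<le> n" "t \<in> region j"
  shows "Phi t - Arg (a1_path t) = 2 * pi * real (n - j)"
proof -
  have "\<forall>t\<in>region (n - i). Phi t - Arg (a1_path t) = 2 * pi * real i" if "i \<le> n" for i
    using that
  proof (induction i)
    case 0
    show ?case using lift_minus_Arg_region_n by (simp del: diff_zero)
  next
    case (Suc i)
    have j: "1 \<le> n - i" "n - i \<le> n" "n - Suc i = n - i - 1" using Suc.prems by auto
    obtain s u where s: "s \<in> region (n - i)" and u: "u \<in> region (n - i - 1)"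
      and step: "Phi u - Arg (a1_path u) = Phi s - Arg (a1_path s) + 2 * pi"
      using lift_crossing_omega[OF j(1,2)] by blast
    have "\<forall>t\<in>region (n - i). Phi t - Arg (a1_path t) = 2 * pi * real i"
      using Suc.prems by (intro Suc.IH) simp
    with s have at_s: "Phi s - Arg (a1_path s) = 2 * pi * real i" by blast
    show ?case
    proof
      fix t assume "t \<in> region (n - Suc i)"
      then have "t \<in> region (n - i - 1)" by (simp only: j(3))
      then have "Phi t - Arg (a1_path t) = Phi u - Arg (a1_path u)"
        by (rule lift_minus_Arg_region_constant[OF _ u])
      also have "\<dots> = 2 * pi * real (Suc i)"
        unfolding step at_s by (simp add: algebra_simps)
      finally show "Phi t - Arg (a1_path t) = 2 * pi * real (Suc i)" .
    qed
  qed
  from this[of "n - j"] show ?thesis using assms by simp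
qed

lemma lift_at_omega:
  assumes "1 \<le> j" "j \<le> n"
  shows "Phi (omega B R j) = 2 * pi * real (n - j) + pi"
proof -
  obtain s where "s \<in> region j" "Phi (omega B R j) = Phi s - Arg (a1_path s) + pi"
    using lift_crossing_omega[OF assms] by blast
  then show ?thesis using lift_minus_Arg_region[OF assms(2)] by simp
qed

end

lemma arg_a1_eqI:
  assumes "\<forall>\<^sub>F e in at_right 0.
    (\<exists>Phi. is_arg_lift A B R e Phi) \<and> (\<forall>Phi. is_arg_lift A B R e Phi \<longrightarrow> Phi k = v)"
  shows "arg_a1 A B R k = v"
  unfolding arg_a1_def
proof (rule the_equality)
  show "\<forall>\<^sub>F e in at_right 0. \<exists>Phi. is_arg_lift A B R e Phi \<and> Phi k = v"
    using assms by eventually_elim blast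
next
  fix v' assume "\<forall>\<^sub>F e in at_right 0. \<exists>Phi. is_arg_lift A B R e Phi \<and> Phi k = v'"
  with assms have "\<forall>\<^sub>F e in at_right (0::real). v' = v" by eventually_elim blast
  then show "v' = v" by simp
qed

context a1_band
begin

lemma eventually_small_bypass: "\<forall>\<^sub>F e in at_right 0. small_bypass A B R n e"
proof -
  obtain \<delta> where \<delta>: "0 < \<delta>"
    "\<And>z. cmod (z + of_real \<bar>B\<bar>) < \<delta> \<Longrightarrow> 0 < Im z \<Longrightarrow> a1 A B R z \<notin> \<real>\<^sub>\<le>\<^sub>0"
    using a1_not_nonpos_near_pole by blast
  have "0 < min \<delta> (pi / (4 * R) - \<bar>B\<bar>)" using \<delta>(1) abs_B_less by simp
  then show ?thesis
  proof (rule eventually_at_right_real[THEN eventually_mono])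
    fix e assume "e \<in> {0<..<min \<delta> (pi / (4 * R) - \<bar>B\<bar>)}"
    then show "small_bypass A B R n e"
      using \<delta>(2) by unfold_locales auto
  qed
qed

lemma arg_a1_eq_lift:
  assumes "0 < \<epsilon>" "\<And>e Phi. arg_lift A B R n e Phi \<Longrightarrow> e < \<epsilon> \<Longrightarrow> Phi k = v"
  shows "arg_a1 A B R k = v"
proof (rule arg_a1_eqI)
  show "\<forall>\<^sub>F e in at_right 0.
      (\<exists>Phi. is_arg_lift A B R e Phi) \<and> (\<forall>Phi. is_arg_lift A B R e Phi \<longrightarrow> Phi k = v)"
    using eventually_small_bypass eventually_at_right_real[OF assms(1)]
  proof eventually_elim
    case (elim e)
    then have bypass: "small_bypass A B R n e" and "e < \<epsilon>" by auto
    have "Phi k = v" if "is_arg_lift A B R e Phi" for Phi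
      using assms(2) arg_lift.intro[OF bypass arg_lift_axioms.intro[OF that]] \<open>e < \<epsilon>\<close> .
    then show ?case using small_bypass.arg_lift_exists[OF bypass] by blast
  qed
qed

lemma arg_a1_region:
  assumes "j \<le> n" "k \<in> region j" "k \<noteq> -\<bar>B\<bar>"
  shows "arg_a1 A B R k = 2 * pi * real (n - j) + Arg (a1 A B R (of_real k))"
proof (rule arg_a1_eq_lift)
  show "0 < \<bar>k + \<bar>B\<bar>\<bar>" using assms(3) by auto
  fix e Phi assume "arg_lift A B R n e Phi" "e < \<bar>k + \<bar>B\<bar>\<bar>"
  then interpret arg_lift A B R n e Phi by simp
  have "bypass_path B e k = of_real k" using \<open>e < _\<close> by (intro bypass_path_real) auto
  then show "Phi k = 2 * pi * real (n - j) + Arg (a1 A B R (of_real k))"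
    using lift_minus_Arg_region[OF assms(1,2)] by simp
qed

lemma arg_a1_omega:
  assumes "1 \<le> j" "j \<le> n"
  shows "arg_a1 A B R (omega B R j) = 2 * pi * real (n - j) + pi"
proof (rule arg_a1_eq_lift[of 1])
  fix e Phi assume "arg_lift A B R n e Phi"
  then interpret arg_lift A B R n e Phi by simp
  show "Phi (omega B R j) = 2 * pi * real (n - j) + pi" using lift_at_omega[OF assms] .
qed simp

lemma arg_a1_region_left_of_pole:
  assumes "j \<le> n" "k \<in> region j" "k < -\<bar>B\<bar>"
  shows "arg_a1 A B R k \<in> {2 * pi * real (n - j) - pi<..<2 * pi * real (n - j) + pi}"
  using arg_a1_region[OF assms(1,2)] Arg_bounds_not_nonpos_Reals[OF a1_not_nonpos_region[OF assms(2,3)]]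
    assms(3) by simp

lemma arg_a1_near_pole:
  assumes "k \<in> {omega B R 1<..<0}" "k \<noteq> -\<bar>B\<bar>"
  shows "arg_a1 A B R k = 2 * pi * real n + Arg (a1 A B R (of_real k))"
  using arg_a1_region[of 0 k] assms by (simp add: region_def)

lemma arg_a1_right_of_pole:
  assumes "k \<in> {-\<bar>B\<bar><..<0}"
  shows "arg_a1 A B R k \<in> {2 * pi * real n<..<2 * pi * real n + pi}"
proof -
  have "0 < Arg (a1 A B R (of_real k)) \<and> Arg (a1 A B R (of_real k)) < pi"
    using assms Im_a1_pos_right Arg_lt_pi by auto
  then show ?thesis
    using assms arg_a1_near_pole[of k] omega_less_abs_B[OF order_refl] by simp
qed

lemma arg_a1_limits_at_pole:
  "\<exists>\<theta>\<in>{0<..<pi}. (arg_a1 A B R \<longlongrightarrow> 2 * pi * real n - \<theta>) (at_left (-\<bar>B\<bar>)) \<and>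
                   (arg_a1 A B R \<longlongrightarrow> 2 * pi * real n + pi - \<theta>) (at_right (-\<bar>B\<bar>))"
proof (intro bexI conjI)
  have near_left: "\<forall>\<^sub>F k in at_left (-\<bar>B\<bar>). 2 * pi * real n + Arg (a1 A B R (of_real k)) = arg_a1 A B R k"
    using eventually_at_left_real[OF omega_less_abs_B[OF order_refl]]
    by eventually_elim (use abs_B_pos arg_a1_near_pole in auto)
  have "((\<lambda>k. 2 * pi * real n + Arg (a1 A B R (of_real k))) \<longlongrightarrow> 2 * pi * real n - 4 * \<bar>B\<bar> * R)
      (at_left (-\<bar>B\<bar>))"
    using tendsto_add[OF tendsto_const[of "2 * pi * real n"] Arg_a1_tendsto_at_pole(1)] by simp
  from Lim_transform_eventually[OF this near_left]
  show "(arg_a1 A B R \<longlongrightarrow> 2 * pi * real n - 4 * \<bar>B\<bar> * R) (at_left (-\<bar>B\<bar>))" .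
  have near_right: "\<forall>\<^sub>F k in at_right (-\<bar>B\<bar>). 2 * pi * real n + Arg (a1 A B R (of_real k)) = arg_a1 A B R k"
    using eventually_right_of_pole
    by eventually_elim (use omega_less_abs_B[OF order_refl] in \<open>auto intro: arg_a1_near_pole[symmetric]\<close>)
  have "((\<lambda>k. 2 * pi * real n + Arg (a1 A B R (of_real k))) \<longlongrightarrow> 2 * pi * real n + pi - 4 * \<bar>B\<bar> * R)
      (at_right (-\<bar>B\<bar>))"
    using tendsto_add[OF tendsto_const[of "2 * pi * real n"] Arg_a1_tendsto_at_pole(2)]
    by (simp add: algebra_simps)
  from Lim_transform_eventually[OF this near_right]
  show "(arg_a1 A B R \<longlongrightarrow> 2 * pi * real n + pi - 4 * \<bar>B\<bar> * R) (at_right (-\<bar>B\<bar>))" .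
  show "4 * \<bar>B\<bar> * R \<in> {0<..<pi}" using B_R_pos B_R_less_pi by simp
qed

lemma arg_a1_tendsto_at_0:
  shows "0 < 4 * B^2 - A^2 \<Longrightarrow> (arg_a1 A B R \<longlongrightarrow> 2 * pi * real n) (at_left 0)"
    and "4 * B^2 - A^2 < 0 \<Longrightarrow> (arg_a1 A B R \<longlongrightarrow> 2 * pi * real n + pi) (at_left 0)"
proof -
  have near_0: "\<forall>\<^sub>F k in at_left 0. 2 * pi * real n + Arg (a1 A B R (of_real k)) = arg_a1 A B R k"
    using eventually_left_of_0
    by eventually_elim (use omega_less_abs_B[OF order_refl] in \<open>auto intro: arg_a1_near_pole[symmetric]\<close>)
  show "(arg_a1 A B R \<longlongrightarrow> 2 * pi * real n) (at_left 0)" if "0 < 4 * B^2 - A^2"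
  proof -
    have "((\<lambda>k. 2 * pi * real n + Arg (a1 A B R (of_real k))) \<longlongrightarrow> 2 * pi * real n) (at_left 0)"
      using tendsto_add[OF tendsto_const[of "2 * pi * real n"] Arg_a1_tendsto_at_0(1)[OF that]]
      by simp
    from Lim_transform_eventually[OF this near_0] show ?thesis .
  qed
  show "(arg_a1 A B R \<longlongrightarrow> 2 * pi * real n + pi) (at_left 0)" if "4 * B^2 - A^2 < 0"
    using Lim_transform_eventually[OF tendsto_add[OF tendsto_const[of "2 * pi * real n"]
        Arg_a1_tendsto_at_0(2)[OF that]] near_0] .
qed

lemma arg_a1_in_band:
  "(\<forall>j\<in>{1..n}. arg_a1 A B R (omega B R (n - j + 1)) = (2 * real j - 1) * pi) \<and>
   (\<forall>k < omega B R n. arg_a1 A B R k \<in> {-pi<..<pi}) \<and>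
   (\<forall>j\<in>{1..n}. \<forall>k\<in>{omega B R (n - j + 1)<..<omega B R (n - j)}.
       arg_a1 A B R k \<in> {2 * pi * real j - pi<..<2 * pi * real j + pi}) \<and>
   (\<exists>\<theta>\<in>{0<..<pi}. (arg_a1 A B R \<longlongrightarrow> 2 * pi * real n - \<theta>) (at_left (-\<bar>B\<bar>)) \<and>
                   (arg_a1 A B R \<longlongrightarrow> 2 * pi * real n + pi - \<theta>) (at_right (-\<bar>B\<bar>))) \<and>
   (\<forall>k\<in>{-\<bar>B\<bar><..<0}. arg_a1 A B R k \<in> {2 * pi * real n<..<2 * pi * real n + pi})"
proof (intro conjI ballI allI impI arg_a1_limits_at_pole)
  fix j assume j: "j \<in> {1..n}"
  then show "arg_a1 A B R (omega B R (n - j + 1)) = (2 * real j - 1) * pi"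
    using arg_a1_omega[of "n - j + 1"] by (auto simp: of_nat_diff algebra_simps)
next
  fix k assume k: "k < omega B R n"
  have "omega B R n \<le> -\<bar>B\<bar>" using omega_less_abs_B[of n] by (cases "n = 0") (auto simp: omega_def)
  then have "k \<in> region n" "k < -\<bar>B\<bar>"
    using k abs_B_pos by (auto simp: region_def omega_def)
  then show "arg_a1 A B R k \<in> {-pi<..<pi}" using arg_a1_region_left_of_pole[of n k] by simp
next
  fix j k assume j: "j \<in> {1..n}" and k: "k \<in> {omega B R (n - j + 1)<..<omega B R (n - j)}"
  have "omega B R (n - j) \<le> -\<bar>B\<bar>"
    using omega_less_abs_B[of "n - j"] by (cases "n - j = 0") (auto simp: omega_def)
  then have "k \<in> region (n - j)" "k < -\<bar>B\<bar>"
    using j k abs_B_pos by (auto simp: region_def Suc_diff_le omega_def)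
  then show "arg_a1 A B R k \<in> {2 * pi * real j - pi<..<2 * pi * real j + pi}"
    using arg_a1_region_left_of_pole[of "n - j" k] j by auto
qed (rule arg_a1_right_of_pole)

end

theorem proposition6:
  fixes A B R :: real
  assumes "A > 0" and "R > 0" and "0 < 4 * \<bar>B\<bar> * R" and "4 * \<bar>B\<bar> * R < pi"
  shows
   "(R < pi / (2 * sqrt (4 * B^2 + A^2)) \<longrightarrow>
       (\<forall>k < -\<bar>B\<bar>. arg_a1 A B R k \<in> {-pi<..<pi}) \<and>
       (\<exists>\<theta>\<in>{0<..<pi}. (arg_a1 A B R \<longlongrightarrow> -\<theta>) (at_left (-\<bar>B\<bar>)) \<and>
                       (arg_a1 A B R \<longlongrightarrow> pi - \<theta>) (at_right (-\<bar>B\<bar>))) \<and>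
       (\<forall>k\<in>{-\<bar>B\<bar><..<0}. arg_a1 A B R k \<in> {0<..<pi}))
    \<and>
    (\<forall>n::nat. n \<ge> 1 \<and> (2 * real n - 1) * pi / (2 * sqrt (4 * B^2 + A^2)) < R \<and>
                R < (2 * real n + 1) * pi / (2 * sqrt (4 * B^2 + A^2)) \<longrightarrow>
       (\<forall>j\<in>{1..n}. arg_a1 A B R (omega B R (n - j + 1)) = (2 * real j - 1) * pi) \<and>
       (\<forall>k < omega B R n. arg_a1 A B R k \<in> {-pi<..<pi}) \<and>
       (\<forall>j\<in>{1..n}. \<forall>k\<in>{omega B R (n - j + 1)<..<omega B R (n - j)}.
           arg_a1 A B R k \<in> {2 * pi * real j - pi<..<2 * pi * real j + pi}) \<and>
       (\<exists>\<theta>\<in>{0<..<pi}. (arg_a1 A B R \<longlongrightarrow> 2 * pi * real n - \<theta>) (at_left (-\<bar>B\<bar>)) \<and>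
                       (arg_a1 A B R \<longlongrightarrow> 2 * pi * real n + pi - \<theta>) (at_right (-\<bar>B\<bar>))) \<and>
       (\<forall>k\<in>{-\<bar>B\<bar><..<0}. arg_a1 A B R k \<in> {2 * pi * real n<..<2 * pi * real n + pi}))
    \<and>
    (4 * B^2 - A^2 > 0 \<longrightarrow>
       (R < pi / (2 * sqrt (4 * B^2 + A^2)) \<longrightarrow> (arg_a1 A B R \<longlongrightarrow> 0) (at_left 0)) \<and>
       (\<forall>n::nat. n \<ge> 1 \<and> (2 * real n - 1) * pi / (2 * sqrt (4 * B^2 + A^2)) < R \<and>
                R < (2 * real n + 1) * pi / (2 * sqrt (4 * B^2 + A^2)) \<longrightarrow>
          (arg_a1 A B R \<longlongrightarrow> 2 * pi * real n) (at_left 0)))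
    \<and>
    (4 * B^2 - A^2 < 0 \<longrightarrow>
       (R < pi / (2 * sqrt (4 * B^2 + A^2)) \<longrightarrow> (arg_a1 A B R \<longlongrightarrow> pi) (at_left 0)) \<and>
       (\<forall>n::nat. n \<ge> 1 \<and> (2 * real n - 1) * pi / (2 * sqrt (4 * B^2 + A^2)) < R \<and>
                R < (2 * real n + 1) * pi / (2 * sqrt (4 * B^2 + A^2)) \<longrightarrow>
          (arg_a1 A B R \<longlongrightarrow> 2 * pi * real n + pi) (at_left 0)))"
proof -
  have band: "a1_band A B R n"
    if "R < (2 * real n + 1) * pi / (2 * sqrt (4 * B^2 + A^2))"
      and "1 \<le> n \<Longrightarrow> (2 * real n - 1) * pi / (2 * sqrt (4 * B^2 + A^2)) < R" for n
    using assms that by unfold_locales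
  have band_0: "a1_band A B R 0" if "R < pi / (2 * sqrt (4 * B^2 + A^2))"
    using that by (intro band) simp_all
  have band_n: "a1_band A B R n"
    if "n \<ge> 1 \<and> (2 * real n - 1) * pi / (2 * sqrt (4 * B^2 + A^2)) < R \<and>
        R < (2 * real n + 1) * pi / (2 * sqrt (4 * B^2 + A^2))" for n
    using that by (intro band) auto
  show ?thesis
    using a1_band.arg_a1_in_band[OF band_0] a1_band.arg_a1_tendsto_at_0[OF band_0]
      a1_band.arg_a1_in_band[OF band_n] a1_band.arg_a1_tendsto_at_0[OF band_n]
    by (auto simp: omega_def)
qed

end
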